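(* Let $G$ be a connected undirected graph. Suppose that for every initial vector $v(0)$ with $\|v(0)\|_1\le1$ and every $t\ge1$ there is a non-negative real random variable $F(t,v(0))$, a function of the random edge sequence of length $t$, such that: (i) there exists $C>0$ such that for every $v(0)$ with $\|v(0)\|_1\le1$, every $t\ge1$ and every $w\in\mathbb R^{V(G)}$, $\mathbb E[F(t,v(0))\mid v(t-1)=w]\ge C\|w-\bar v\|_1$; and (ii) $\sum_{t=1}^k F(t,v(0))$ converges in $L^1$ (over random infinite edge sequences), as $k\to\infty$, to a random variable $F(v(0))$. Let $\mathbb E_{\max}=\max_{\|v(0)\|_1\le1}\mathbb E[F(v(0))]$. Then for every $\epsilon>0$, $$t_{\epsilon,1}(G,v(0))\le\frac{8\,\mathbb E[F(v(0))]}{\epsilon^2C}\qquad\text{and}\qquad t_{\epsilon,1}(G)\le\frac{8\,\mathbb E_{\max}}{\epsilon^2C},$$ where $t_{\epsilon,1}(G,v(0))=\min\{t\in\mathbb N:\mathbb E\|v(t)-\bar v\|_1\le\epsilon\}$.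
   Context: The averaging process on a finite, undirected, connected graph $G=(V,E)$, $V=\{1,\dots,n\}$: the state vector $v(t)\in\mathbb R^n$, $t=0,1,2,\dots$, starts from a given $v(0)$; at each step $t\ge 1$ an edge $\{i,j\}\in E$ is chosen uniformly at random (independently of all previous choices) and both $v_i$ and $v_j$ are replaced by $(v_i+v_j)/2$, all other coordinates unchanged. $\bar v=(a,\dots,a)^T$ with $a=\frac1n\sum_i v_i(0)$. $t_{\epsilon,1}(G)$ is the least $t\in\mathbb N$ such that for every $v(0)$ with $\|v(0)\|_1=1$ one has $\mathbb E\|v(t)-\bar v\|_1\le\epsilon$. *)

theory Defs
  imports "HOL-Probability.Probability"
begin

text \<open>Vertices: a finite type 'a (V = UNIV). Edges: a set E of two-element subsets of V.\<close>

definition simple_graph :: "'a set set \<Rightarrow> bool" where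
  "simple_graph E \<longleftrightarrow> (\<forall>e\<in>E. \<exists>x y. x \<noteq> y \<and> e = {x, y})"

definition connected_graph :: "'a set set \<Rightarrow> bool" where
  "connected_graph E \<longleftrightarrow> (\<forall>x y. (x, y) \<in> {(u, v). {u, v} \<in> E}\<^sup>*)"

definition avg_step :: "'a set \<Rightarrow> ('a \<Rightarrow> real) \<Rightarrow> ('a \<Rightarrow> real)" where
  "avg_step e v = (\<lambda>k. if k \<in> e then (\<Sum>x\<in>e. v x) / 2 else v k)"

definition avg_proc :: "('a \<Rightarrow> real) \<Rightarrow> 'a set list \<Rightarrow> ('a \<Rightarrow> real)" where
  "avg_proc v0 es = foldl (\<lambda>v e. avg_step e v) v0 es"

definition l1norm :: "('a::finite \<Rightarrow> real) \<Rightarrow> real" where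
  "l1norm v = (\<Sum>x\<in>UNIV. \<bar>v x\<bar>)"

definition vbar :: "('a::finite \<Rightarrow> real) \<Rightarrow> ('a \<Rightarrow> real)" where
  "vbar v0 = (\<lambda>_. (\<Sum>x\<in>UNIV. v0 x) / real CARD('a))"

text \<open>Edge sequences of length t; the uniform distribution on them is t i.i.d. uniform edges.\<close>
definition edge_seqs :: "'a set set \<Rightarrow> nat \<Rightarrow> 'a set list set" where
  "edge_seqs E t = {es. set es \<subseteq> E \<and> length es = t}"

definition seq_pmf :: "'a set set \<Rightarrow> nat \<Rightarrow> 'a set list pmf" where
  "seq_pmf E t = pmf_of_set (edge_seqs E t)"

definition exp_err :: "'a::finite set set \<Rightarrow> ('a \<Rightarrow> real) \<Rightarrow> nat \<Rightarrow> real" where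
  "exp_err E v0 t = measure_pmf.expectation (seq_pmf E t)
      (\<lambda>es. l1norm (\<lambda>x. avg_proc v0 es x - vbar v0 x))"

definition t_eps_v0 :: "'a::finite set set \<Rightarrow> real \<Rightarrow> ('a \<Rightarrow> real) \<Rightarrow> nat" where
  "t_eps_v0 E \<epsilon> v0 = (LEAST t. exp_err E v0 t \<le> \<epsilon>)"

definition t_eps :: "'a::finite set set \<Rightarrow> real \<Rightarrow> nat" where
  "t_eps E \<epsilon> = (LEAST t. \<forall>v0. l1norm v0 = 1 \<longrightarrow> exp_err E v0 t \<le> \<epsilon>)"

definition edge_stream_space :: "'a set set \<Rightarrow> 'a set stream measure" where
  "edge_stream_space E = stream_space (measure_pmf (pmf_of_set E))"

end

theory Submission
  imports Defs
begin

(*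
  Conditioning on v(t-1), hypothesis (i) gives E F(t) >= C E|v(t-1) - vbar|_1; as the partial
  sums of the nonnegative F(t) converge in L^1, C (sum over t < k of E|v(t) - vbar|_1) <= E F for
  every k. If the error stays above eps during the first T steps this yields T eps C <= E F, and
  T > 0 forces eps < |v(0) - vbar|_1 <= 2, whence T <= 2 E F / (eps^2 C). Averaging along an edge
  never increases the l1 distance to the mean, so the error is nonincreasing in t; this turns the
  bounds for the individual v(0) into one for t_eps(G).
*)

lemma pair_pmf_of_set:
  assumes "finite A" "A \<noteq> {}" "finite B" "B \<noteq> {}"
  shows "pair_pmf (pmf_of_set A) (pmf_of_set B) = pmf_of_set (A \<times> B)"
proof (rule pmf_eqI)
  fix ab :: "'a \<times> 'b"
  show "pmf (pair_pmf (pmf_of_set A) (pmf_of_set B)) ab = pmf (pmf_of_set (A \<times> B)) ab"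
    using assms by (cases ab) (simp add: pmf_pair card_cartesian_product indicator_def)
qed

lemma replicate_pmf_Suc_snoc:
  "replicate_pmf (Suc n) p = map_pmf (\<lambda>(xs, x). xs @ [x]) (pair_pmf (replicate_pmf n p) p)"
  using replicate_pmf_distrib[of n 1 p]
  by (simp add: replicate_pmf_1 pair_pmf_def map_pmf_def bind_assoc_pmf bind_return_pmf)

lemma map_butlast_replicate_pmf: "map_pmf butlast (replicate_pmf (Suc n) p) = replicate_pmf n p"
proof -
  have butlast_snoc: "butlast \<circ> (\<lambda>(xs, x). xs @ [x]) = fst" by auto
  show ?thesis
    unfolding replicate_pmf_Suc_snoc pmf.map_comp butlast_snoc by (rule map_fst_pair_pmf)
qed

lemma nn_integral_stream_space_stake:
  fixes p :: "'a::countable pmf"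
  shows "(\<integral>\<^sup>+\<omega>. f (stake n \<omega>) \<partial>stream_space (measure_pmf p)) = (\<integral>\<^sup>+xs. f xs \<partial>replicate_pmf n p)"
proof (induction n arbitrary: f)
  case 0
  interpret prob_space "stream_space (measure_pmf p)"
    by (rule prob_space.prob_space_stream_space) (rule measure_pmf.prob_space_axioms)
  show ?case by (simp add: emeasure_space_1)
next
  case (Suc n)
  have "(\<integral>\<^sup>+\<omega>. f (stake (Suc n) \<omega>) \<partial>stream_space (measure_pmf p))
      = (\<integral>\<^sup>+x. \<integral>\<^sup>+\<omega>. f (x # stake n \<omega>) \<partial>stream_space (measure_pmf p) \<partial>p)"
    by (subst prob_space.nn_integral_stream_space[OF measure_pmf.prob_space_axioms]) auto
  also have "\<dots> = (\<integral>\<^sup>+x. \<integral>\<^sup>+xs. f (x # xs) \<partial>replicate_pmf n p \<partial>p)"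
    by (intro nn_integral_cong Suc.IH)
  also have "\<dots> = (\<integral>\<^sup>+xs. f xs \<partial>replicate_pmf (Suc n) p)"
    by simp
  finally show ?case .
qed

lemma distr_stream_space_stake:
  fixes p :: "'a::countable pmf"
  shows "distr (stream_space (measure_pmf p)) (count_space UNIV) (stake n)
    = measure_pmf (replicate_pmf n p)"
proof (rule measure_eqI)
  fix A assume "A \<in> sets (distr (stream_space (measure_pmf p)) (count_space UNIV) (stake n))"
  show "emeasure (distr (stream_space (measure_pmf p)) (count_space UNIV) (stake n)) A
      = emeasure (replicate_pmf n p) A"
    by (simp add: nn_integral_distr nn_integral_stream_space_stake flip: nn_integral_indicator)
qed simp

lemma integral_stream_space_stake:
  fixes p :: "'a::countable pmf" and g :: "'a list \<Rightarrow> real"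
  shows "(\<integral>\<omega>. g (stake n \<omega>) \<partial>stream_space (measure_pmf p))
    = measure_pmf.expectation (replicate_pmf n p) g"
  by (simp add: integral_distr flip: distr_stream_space_stake)

lemma finite_set_pmf_replicate_pmf:
  "finite (set_pmf p) \<Longrightarrow> finite (set_pmf (replicate_pmf n p))"
  by (simp add: set_replicate_pmf lists_eq_set finite_lists_length_eq)

lemma integrable_stream_space_stake:
  fixes p :: "'a::countable pmf" and g :: "'a list \<Rightarrow> real"
  assumes "finite (set_pmf p)"
  shows "integrable (stream_space (measure_pmf p)) (\<lambda>\<omega>. g (stake n \<omega>))"
proof -
  have "integrable (distr (stream_space (measure_pmf p)) (count_space UNIV) (stake n)) g"
    unfolding distr_stream_space_stake
    by (rule integrable_measure_pmf_finite[OF finite_set_pmf_replicate_pmf[OF assms]])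
  then show ?thesis
    by (simp add: integrable_distr_eq)
qed

lemma expectation_le_of_cond_expectation_le:
  fixes p :: "'a pmf" and k :: "'a \<Rightarrow> 'b" and g :: "'b \<Rightarrow> real" and f :: "'a \<Rightarrow> real"
  assumes fin: "finite (set_pmf p)"
    and cond: "\<And>x. x \<in> set_pmf p \<Longrightarrow> g (k x) \<le> measure_pmf.expectation (cond_pmf p {y. k y = k x}) f"
  shows "measure_pmf.expectation p (\<lambda>x. g (k x)) \<le> measure_pmf.expectation p f"
proof -
  have total: "bind_pmf p (\<lambda>x. cond_pmf p {y. k y = k x}) = p"
    by (rule bind_cond_pmf_cancel) (auto intro!: arg_cong[where f = "measure_pmf.prob p"])
  have fin_cond: "finite (set_pmf (cond_pmf p {y. k y = k x}))" if "x \<in> set_pmf p" for x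
    using that fin by (subst set_cond_pmf) auto
  have "measure_pmf.expectation p (\<lambda>x. g (k x)) = (\<Sum>x\<in>set_pmf p. pmf p x * g (k x))"
    using fin by (subst integral_measure_pmf[of "set_pmf p"]) auto
  also have "\<dots> \<le> (\<Sum>x\<in>set_pmf p. pmf p x * measure_pmf.expectation (cond_pmf p {y. k y = k x}) f)"
    by (intro sum_mono mult_left_mono cond) auto
  also have "\<dots> = measure_pmf.expectation p f"
    using fin fin_cond
    by (subst (2) total[symmetric], subst pmf_expectation_bind[of "set_pmf p"]) auto
  finally show ?thesis .
qed

lemma integral_tendsto_of_L1_tendsto:
  fixes u :: "nat \<Rightarrow> 'a \<Rightarrow> real"
  assumes "\<And>n. integrable M (u n)" "integrable M f"
    and "(\<lambda>n. \<integral>x. \<bar>u n x - f x\<bar> \<partial>M) \<longlonglongrightarrow> 0"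
  shows "(\<lambda>n. \<integral>x. u n x \<partial>M) \<longlonglongrightarrow> (\<integral>x. f x \<partial>M)"
proof (rule tendsto_L1_int)
  have "(\<integral>\<^sup>+x. norm (u n x - f x) \<partial>M) = ennreal (\<integral>x. \<bar>u n x - f x\<bar> \<partial>M)" for n
    using assms(1,2) by (simp add: nn_integral_eq_integral)
  then show "(\<lambda>n. \<integral>\<^sup>+x. norm (u n x - f x) \<partial>M) \<longlonglongrightarrow> 0"
    using tendsto_ennrealI[OF assms(3)] by simp
qed (use assms in auto)

lemma edge_seqs_Suc: "edge_seqs E (Suc n) = (\<lambda>(e, es). e # es) ` (E \<times> edge_seqs E n)"
  unfolding edge_seqs_def by (auto simp: length_Suc_conv)

lemma finite_edge_seqs: "finite (edge_seqs (E :: 'a::finite set set) n)"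
  unfolding edge_seqs_def by (simp add: finite_lists_length_eq)

lemma seq_pmf_eq_replicate_pmf:
  fixes E :: "'a::finite set set"
  assumes "E \<noteq> {}"
  shows "seq_pmf E n = replicate_pmf n (pmf_of_set E)"
proof (induction n)
  case 0
  have "edge_seqs E 0 = {[]}" unfolding edge_seqs_def by auto
  then show ?case by (simp add: seq_pmf_def pmf_of_set_singleton)
next
  case (Suc n)
  obtain e where "e \<in> E" using assms by blast
  then have "replicate n e \<in> edge_seqs E n" unfolding edge_seqs_def by auto
  then have ne: "edge_seqs E n \<noteq> {}" by blast
  have "seq_pmf E (Suc n) = map_pmf (\<lambda>(e, es). e # es) (pmf_of_set (E \<times> edge_seqs E n))"
    unfolding seq_pmf_def edge_seqs_Suc using assms ne
    by (subst map_pmf_of_set_inj) (auto simp: inj_on_def finite_edge_seqs)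
  also have "\<dots> = replicate_pmf (Suc n) (pmf_of_set E)"
    using assms ne
    by (simp add: finite_edge_seqs Suc.IH[symmetric] seq_pmf_def pair_pmf_of_set[symmetric]
        pair_pmf_def map_pmf_def bind_assoc_pmf bind_return_pmf)
  finally show ?case .
qed

lemma set_pmf_seq_pmf:
  fixes E :: "'a::finite set set"
  assumes "E \<noteq> {}"
  shows "set_pmf (seq_pmf E n) = edge_seqs E n"
  using assms by (simp add: seq_pmf_eq_replicate_pmf set_replicate_pmf edge_seqs_def lists_eq_set)

lemma l1norm_avg_step_le:
  assumes "simple_graph E" "e \<in> E"
  shows "l1norm (\<lambda>k. avg_step e v k - c) \<le> l1norm (\<lambda>k. v k - c)"
proof -
  obtain x y where xy: "x \<noteq> y" "e = {x, y}"
    using assms unfolding simple_graph_def by blast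
  have split: "sum f UNIV = f x + f y + sum f (- {x, y})" for f :: "'a \<Rightarrow> real"
    using sum.subset_diff[of "{x, y}" UNIV f] xy by (simp add: Compl_eq_Diff_UNIV)
  have "\<bar>(v x + v y) / 2 - c\<bar> + \<bar>(v x + v y) / 2 - c\<bar> \<le> \<bar>v x - c\<bar> + \<bar>v y - c\<bar>"
    by (simp add: abs_real_def field_simps)
  then show ?thesis
    unfolding l1norm_def split[of "\<lambda>k. \<bar>avg_step e v k - c\<bar>"] split[of "\<lambda>k. \<bar>v k - c\<bar>"]
    using xy by (simp add: avg_step_def)
qed

lemma exp_err_Suc_le:
  fixes E :: "'a::finite set set"
  assumes simple: "simple_graph E" and ne: "E \<noteq> {}"
  shows "exp_err E v0 (Suc n) \<le> exp_err E v0 n"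
proof -
  define c where "c = (\<Sum>x\<in>UNIV. v0 x) / real CARD('a)"
  define h where "h v = l1norm (\<lambda>x. v x - c)" for v :: "'a \<Rightarrow> real"
  define q where "q = pair_pmf (replicate_pmf n (pmf_of_set E)) (pmf_of_set E)"
  have fin: "finite (set_pmf q)"
    unfolding q_def using ne by (simp add: finite_set_pmf_replicate_pmf)
  have "exp_err E v0 (Suc n)
      = measure_pmf.expectation (map_pmf (\<lambda>(es, e). es @ [e]) q) (\<lambda>es. h (avg_proc v0 es))"
    unfolding exp_err_def seq_pmf_eq_replicate_pmf[OF ne] replicate_pmf_Suc_snoc
      q_def h_def c_def vbar_def ..
  also have "\<dots> = measure_pmf.expectation q (\<lambda>(es, e). h (avg_step e (avg_proc v0 es)))"
    unfolding integral_map_pmf by (simp add: avg_proc_def split_beta')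
  also have "\<dots> \<le> measure_pmf.expectation q (\<lambda>(es, e). h (avg_proc v0 es))"
    using fin ne unfolding h_def
    by (intro integral_mono_AE integrable_measure_pmf_finite)
       (auto simp: AE_measure_pmf_iff q_def intro!: l1norm_avg_step_le[OF simple])
  also have "\<dots> = measure_pmf.expectation (map_pmf fst q) (\<lambda>es. h (avg_proc v0 es))"
    unfolding integral_map_pmf by (simp add: split_beta')
  also have "\<dots> = exp_err E v0 n"
    unfolding q_def map_fst_pair_pmf exp_err_def seq_pmf_eq_replicate_pmf[OF ne]
      h_def c_def vbar_def ..
  finally show ?thesis .
qed

lemma exp_err_0_le: "exp_err E v0 0 \<le> 2 * l1norm v0"
proof -
  have "edge_seqs E 0 = {[]}"
    unfolding edge_seqs_def by auto
  then have "seq_pmf E 0 = return_pmf []"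
    unfolding seq_pmf_def by (simp add: pmf_of_set_singleton)
  then have "exp_err E v0 0 = (\<Sum>x\<in>UNIV. \<bar>v0 x - (\<Sum>y\<in>UNIV. v0 y) / real CARD('a)\<bar>)"
    by (simp add: exp_err_def avg_proc_def l1norm_def vbar_def)
  also have "\<dots> \<le> (\<Sum>x\<in>UNIV. \<bar>v0 x\<bar> + \<bar>\<Sum>y\<in>UNIV. v0 y\<bar> / real CARD('a))"
    by (intro sum_mono) (simp add: abs_triangle_ineq4[THEN order_trans])
  also have "\<dots> = l1norm v0 + \<bar>\<Sum>y\<in>UNIV. v0 y\<bar>"
    by (simp add: l1norm_def sum.distrib)
  also have "\<bar>\<Sum>y\<in>UNIV. v0 y\<bar> \<le> l1norm v0"
    unfolding l1norm_def by (rule sum_abs)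
  finally show ?thesis by simp
qed

lemma exp_err_le_expectation:
  fixes E :: "'a::finite set set"
  assumes ne: "E \<noteq> {}"
    and cond: "\<And>w. {es \<in> edge_seqs E (Suc n). avg_proc v0 (butlast es) = w} \<noteq> {} \<Longrightarrow>
      C * l1norm (\<lambda>x. w x - vbar v0 x)
        \<le> measure_pmf.expectation
             (cond_pmf (seq_pmf E (Suc n)) {es. avg_proc v0 (butlast es) = w}) f"
  shows "C * exp_err E v0 n \<le> measure_pmf.expectation (seq_pmf E (Suc n)) f"
proof -
  have "C * exp_err E v0 n = C * measure_pmf.expectation (map_pmf butlast (seq_pmf E (Suc n)))
      (\<lambda>es. l1norm (\<lambda>x. avg_proc v0 es x - vbar v0 x))"
    unfolding exp_err_def seq_pmf_eq_replicate_pmf[OF ne] map_butlast_replicate_pmf ..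
  also have "\<dots> = measure_pmf.expectation (seq_pmf E (Suc n))
      (\<lambda>es. C * l1norm (\<lambda>x. avg_proc v0 (butlast es) x - vbar v0 x))"
    by simp
  also have "\<dots> \<le> measure_pmf.expectation (seq_pmf E (Suc n)) f"
    by (rule expectation_le_of_cond_expectation_le[where k = "\<lambda>es. avg_proc v0 (butlast es)"])
       (use ne in \<open>auto simp: set_pmf_seq_pmf finite_edge_seqs intro!: cond\<close>)
  finally show ?thesis .
qed

lemma decseq_exp_err:
  fixes E :: "'a::finite set set"
  assumes "simple_graph E" "E \<noteq> {}"
  shows "decseq (exp_err E v0)"
  by (rule decseq_SucI) (rule exp_err_Suc_le[OF assms])

lemma sum_exp_err_le_integral:
  fixes E :: "'a::finite set set" and F :: "nat \<Rightarrow> 'a set list \<Rightarrow> real"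
    and Flim :: "'a set stream \<Rightarrow> real"
  assumes ne: "E \<noteq> {}"
    and F_nonneg: "\<And>t es. t \<ge> 1 \<Longrightarrow> es \<in> edge_seqs E t \<Longrightarrow> F t es \<ge> 0"
    and cond_exp: "\<And>t w. t \<ge> 1 \<Longrightarrow>
        {es \<in> edge_seqs E t. avg_proc v0 (butlast es) = w} \<noteq> {} \<Longrightarrow>
        measure_pmf.expectation (cond_pmf (seq_pmf E t) {es. avg_proc v0 (butlast es) = w}) (F t)
          \<ge> C * l1norm (\<lambda>x. w x - vbar v0 x)"
    and Flim_int: "integrable (edge_stream_space E) Flim"
    and partial_int: "\<And>k. integrable (edge_stream_space E) (\<lambda>\<omega>. \<Sum>t=1..k. F t (stake t \<omega>))"
    and L1_conv: "(\<lambda>k. \<integral>\<omega>. \<bar>(\<Sum>t=1..k. F t (stake t \<omega>)) - Flim \<omega>\<bar> \<partial>edge_stream_space E)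
        \<longlonglongrightarrow> 0"
  shows "C * (\<Sum>t<k. exp_err E v0 t) \<le> (\<integral>\<omega>. Flim \<omega> \<partial>edge_stream_space E)"
proof -
  define J where "J k = (\<Sum>t=1..k. measure_pmf.expectation (seq_pmf E t) (F t))" for k
  have fin: "finite (set_pmf (pmf_of_set E))"
    using ne by simp
  have "(\<integral>\<omega>. (\<Sum>t=1..k. F t (stake t \<omega>)) \<partial>edge_stream_space E) = J k" for k
    unfolding J_def edge_stream_space_def seq_pmf_eq_replicate_pmf[OF ne]
    by (simp add: integrable_stream_space_stake[OF fin] integral_stream_space_stake)
  then have "J \<longlonglongrightarrow> (\<integral>\<omega>. Flim \<omega> \<partial>edge_stream_space E)"
    using integral_tendsto_of_L1_tendsto[OF partial_int Flim_int L1_conv] by simp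
  moreover have "incseq J"
  proof (rule incseq_SucI)
    fix k
    have "0 \<le> measure_pmf.expectation (seq_pmf E (Suc k)) (F (Suc k))"
      using ne by (intro integral_nonneg_AE) (simp add: AE_measure_pmf_iff set_pmf_seq_pmf F_nonneg)
    then show "J k \<le> J (Suc k)"
      unfolding J_def by simp
  qed
  ultimately have "J k \<le> (\<integral>\<omega>. Flim \<omega> \<partial>edge_stream_space E)"
    by (intro incseq_le)
  moreover have "C * (\<Sum>t<k. exp_err E v0 t) \<le> J k"
    unfolding J_def sum_distrib_left sum.atLeast1_atMost_eq[of _ k, unfolded One_nat_def[symmetric]]
    using ne cond_exp by (intro sum_mono exp_err_le_expectation) auto
  ultimately show ?thesis
    by linarith
qed

lemma hitting_time_le_of_partial_sums_le:
  fixes f :: "nat \<Rightarrow> real"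
  assumes "c > 0" "\<epsilon> > 0" and sums: "\<And>k. c * (\<Sum>t<k. f t) \<le> I"
  shows "\<exists>t. f t \<le> \<epsilon>" and "real (LEAST t. f t \<le> \<epsilon>) * \<epsilon> * c \<le> I"
proof -
  have bound: "real k * \<epsilon> * c \<le> I" if above: "\<And>t. t < k \<Longrightarrow> \<epsilon> < f t" for k
  proof -
    have "real k * \<epsilon> \<le> (\<Sum>t<k. f t)"
      using sum_mono[of "{..<k}" "\<lambda>_. \<epsilon>" f] above by fastforce
    then have "c * (real k * \<epsilon>) \<le> c * (\<Sum>t<k. f t)"
      using \<open>c > 0\<close> by simp
    then show ?thesis
      using sums[of k] by (simp add: mult_ac)
  qed
  show "\<exists>t. f t \<le> \<epsilon>"
  proof (rule ccontr)
    assume "\<nexists>t. f t \<le> \<epsilon>"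
    then have never: "real k * \<epsilon> * c \<le> I" for k
      by (intro bound) (meson not_le)
    obtain k where "I / (\<epsilon> * c) < real k"
      using reals_Archimedean2 by blast
    then show False
      using never[of k] assms by (simp add: divide_less_eq mult.assoc)
  qed
  show "real (LEAST t. f t \<le> \<epsilon>) * \<epsilon> * c \<le> I"
    by (rule bound) (meson not_le not_less_Least)
qed

lemma t_eps_v0_le:
  assumes "C > 0" "\<epsilon> > 0" "l1norm v0 \<le> 1"
    and sums: "\<And>k. C * (\<Sum>t<k. exp_err E v0 t) \<le> I"
  shows "exp_err E v0 (t_eps_v0 E \<epsilon> v0) \<le> \<epsilon>"
    and "real (t_eps_v0 E \<epsilon> v0) \<le> 2 * I / (\<epsilon>\<^sup>2 * C)"
proof -
  note hit = hitting_time_le_of_partial_sums_le[OF assms(1,2) sums]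
  show "exp_err E v0 (t_eps_v0 E \<epsilon> v0) \<le> \<epsilon>"
    unfolding t_eps_v0_def by (rule LeastI_ex[OF hit(1)])
  have T: "real (t_eps_v0 E \<epsilon> v0) * \<epsilon> * C \<le> I"
    using hit(2) unfolding t_eps_v0_def .
  have "0 \<le> I"
    using sums[of 0] by simp
  show "real (t_eps_v0 E \<epsilon> v0) \<le> 2 * I / (\<epsilon>\<^sup>2 * C)"
  proof (cases "t_eps_v0 E \<epsilon> v0 = 0")
    case True
    then show ?thesis using \<open>0 \<le> I\<close> assms by simp
  next
    case False
    then have "\<epsilon> < exp_err E v0 0"
      unfolding t_eps_v0_def by (meson not_le not_less_Least neq0_conv)
    also have "\<dots> \<le> 2"
      using exp_err_0_le[of E v0] assms(3) by linarith
    finally have "real (t_eps_v0 E \<epsilon> v0) * \<epsilon> * C * \<epsilon> \<le> I * 2"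
      using T \<open>0 \<le> I\<close> \<open>\<epsilon> > 0\<close> by (meson less_imp_le mult_mono)
    then show ?thesis
      using assms by (simp add: pos_le_divide_eq power2_eq_square mult_ac)
  qed
qed

lemma t_eps_le:
  fixes E :: "'a::finite set set"
  assumes "simple_graph E" "E \<noteq> {}"
    and hit: "\<And>v0. l1norm v0 = 1 \<Longrightarrow>
      exp_err E v0 (t_eps_v0 E \<epsilon> v0) \<le> \<epsilon> \<and> real (t_eps_v0 E \<epsilon> v0) \<le> B"
  shows "real (t_eps E \<epsilon>) \<le> B"
proof -
  have "l1norm (\<lambda>x::'a. if x = undefined then 1 else 0) = 1"
    by (simp add: l1norm_def)
  then have "0 \<le> B"
    using hit by (meson of_nat_0_le_iff order_trans)
  have "exp_err E v0 (nat \<lfloor>B\<rfloor>) \<le> \<epsilon>" if "l1norm v0 = 1" for v0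
  proof -
    have "t_eps_v0 E \<epsilon> v0 \<le> nat \<lfloor>B\<rfloor>"
      using hit[OF that] by (intro le_nat_floor) simp
    then show ?thesis
      using decseqD[OF decseq_exp_err[OF assms(1,2)]] hit[OF that] by (meson order_trans)
  qed
  then have "t_eps E \<epsilon> \<le> nat \<lfloor>B\<rfloor>"
    unfolding t_eps_def by (intro Least_le) blast
  then show ?thesis
    using of_nat_floor[OF \<open>0 \<le> B\<close>] by linarith
qed

theorem proposition6:
  fixes E :: "'a::finite set set"
    and F :: "nat \<Rightarrow> ('a \<Rightarrow> real) \<Rightarrow> 'a set list \<Rightarrow> real"
    and Flim :: "('a \<Rightarrow> real) \<Rightarrow> 'a set stream \<Rightarrow> real"
    and C :: real
  assumes simple: "simple_graph E"
    and conn: "connected_graph E"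
    and nonempty: "E \<noteq> {}"
    and F_nonneg: "\<And>t v0 es. l1norm v0 \<le> 1 \<Longrightarrow> t \<ge> 1 \<Longrightarrow> es \<in> edge_seqs E t \<Longrightarrow> F t v0 es \<ge> 0"
    and C_pos: "C > 0"
    and cond_exp: "\<And>t v0 w. l1norm v0 \<le> 1 \<Longrightarrow> t \<ge> 1 \<Longrightarrow>
        {es \<in> edge_seqs E t. avg_proc v0 (butlast es) = w} \<noteq> {} \<Longrightarrow>
        measure_pmf.expectation (cond_pmf (seq_pmf E t) {es. avg_proc v0 (butlast es) = w}) (F t v0)
          \<ge> C * l1norm (\<lambda>x. w x - vbar v0 x)"
    and Flim_int: "\<And>v0. l1norm v0 \<le> 1 \<Longrightarrow> integrable (edge_stream_space E) (Flim v0)"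
    and partial_int: "\<And>v0 k. l1norm v0 \<le> 1 \<Longrightarrow>
        integrable (edge_stream_space E) (\<lambda>\<omega>. \<Sum>t=1..k. F t v0 (stake t \<omega>))"
    and L1_conv: "\<And>v0. l1norm v0 \<le> 1 \<Longrightarrow>
        (\<lambda>k. \<integral>\<omega>. \<bar>(\<Sum>t=1..k. F t v0 (stake t \<omega>)) - Flim v0 \<omega>\<bar> \<partial>edge_stream_space E)
          \<longlonglongrightarrow> 0"
  shows "\<forall>\<epsilon>>0.
     (\<forall>v0. l1norm v0 \<le> 1 \<longrightarrow>
        real (t_eps_v0 E \<epsilon> v0) \<le> 8 * (\<integral>\<omega>. Flim v0 \<omega> \<partial>edge_stream_space E) / (\<epsilon>\<^sup>2 * C))
   \<and> (bdd_above ((\<lambda>v0. \<integral>\<omega>. Flim v0 \<omega> \<partial>edge_stream_space E) ` {v0. l1norm v0 \<le> 1}) \<longrightarrow>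
        real (t_eps E \<epsilon>) \<le>
          8 * (SUP v0\<in>{v0. l1norm v0 \<le> 1}. \<integral>\<omega>. Flim v0 \<omega> \<partial>edge_stream_space E) / (\<epsilon>\<^sup>2 * C))"
proof -
  let ?I = "\<lambda>v0. \<integral>\<omega>. Flim v0 \<omega> \<partial>edge_stream_space E"
  have sums: "C * (\<Sum>t<k. exp_err E v0 t) \<le> ?I v0" if "l1norm v0 \<le> 1" for v0 k
    by (rule sum_exp_err_le_integral[where F = "\<lambda>t. F t v0", OF nonempty F_nonneg[OF that]
        cond_exp[OF that] Flim_int[OF that] partial_int[OF that] L1_conv[OF that]])
  have I_nonneg: "0 \<le> ?I v0" if "l1norm v0 \<le> 1" for v0
    using sums[OF that, of 0] by simp
  have hit: "exp_err E v0 (t_eps_v0 E \<epsilon> v0) \<le> \<epsilon> \<and> real (t_eps_v0 E \<epsilon> v0) \<le> 8 * M / (\<epsilon>\<^sup>2 * C)"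
    if "\<epsilon> > 0" "l1norm v0 \<le> 1" "?I v0 \<le> M" for \<epsilon> v0 M
  proof -
    have "2 * ?I v0 / (\<epsilon>\<^sup>2 * C) \<le> 8 * M / (\<epsilon>\<^sup>2 * C)"
      using I_nonneg[OF that(2)] that(3) C_pos by (intro divide_right_mono) auto
    then show ?thesis
      using t_eps_v0_le[OF C_pos that(1,2) sums[OF that(2)]] by linarith
  qed
  show ?thesis
  proof (intro allI impI conjI)
    fix \<epsilon> :: real and v0 :: "'a \<Rightarrow> real"
    assume "\<epsilon> > 0" "l1norm v0 \<le> 1"
    then show "real (t_eps_v0 E \<epsilon> v0) \<le> 8 * ?I v0 / (\<epsilon>\<^sup>2 * C)"
      using hit by blast
  next
    fix \<epsilon> :: real
    assume "\<epsilon> > 0" and bdd: "bdd_above (?I ` {v0. l1norm v0 \<le> 1})"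
    have I_le_SUP: "?I v0 \<le> (SUP v0\<in>{v0. l1norm v0 \<le> 1}. ?I v0)" if "l1norm v0 \<le> 1" for v0
      by (rule cSUP_upper[OF _ bdd]) (use that in simp)
    show "real (t_eps E \<epsilon>) \<le> 8 * (SUP v0\<in>{v0. l1norm v0 \<le> 1}. ?I v0) / (\<epsilon>\<^sup>2 * C)"
      by (intro t_eps_le[OF simple nonempty] hit[OF \<open>\<epsilon> > 0\<close>]) (auto intro: I_le_SUP)
  qed
qed

end
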